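(* Let $U\subset\mathbb{R}^n$ be an open set with coordinates $u^{i(\alpha)}$, $\alpha\in\{1,\dots,r\}$, $i\in\{1,\dots,m_\alpha\}$, where $n=m_1+\dots+m_r$, equipped with the commutative associative product $\circ$ with structure constants $c^{i(\alpha)}_{j(\beta)k(\gamma)}=\delta^\alpha_\beta\delta^\alpha_\gamma\delta^i_{j+k-1}$ and unit $e$ with components $e^{i(\alpha)}=\delta^i_1$. Let $X$ be a vector field on $U$ and let $\nabla$ be the torsionless connection on $U$ uniquely determined by the conditions $$\nabla_j e^i=0,\qquad c^i_{js}\nabla_kX^s-c^i_{ks}\nabla_jX^s=0,\qquad i,j,k\in\{1,\dots,n\}.$$ Let $Y$ be a vector field on $U$ satisfying $$(d_\nabla(Y\circ))^i_{jk}:=c^i_{js}\nabla_kY^s-c^i_{ks}\nabla_jY^s=0,\qquad i,j,k\in\{1,\dots,n\}.$$ Let $\mathbf{u}(x,t)=(u^1(x,t),\dots,u^n(x,t))$ be a (differentiable) function with values in $U$ satisfying the algebraic system $$x\,e^{i}+t\,X^{i}(\mathbf{u}(x,t))=Y^{i}(\mathbf{u}(x,t)),\qquad i\in\{1,\dots,n\}.$$ Then $\mathbf{u}(x,t)$ is a solution of the system of hydrodynamic type $$u^i_t=c^i_{jk}X^j(\mathbf{u})\,u^k_x,\qquad i\in\{1,\dots,n\}.$$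
   Context: Double-index notation: the index $i(\alpha)$ denotes the single index $m_1+\dots+m_{\alpha-1}+i$, and summation over repeated indices is understood. The coordinates are canonical (David–Hertling) coordinates of a regular F-manifold with Euler vector field, in which the Euler vector field has components $E^{i(\alpha)}=u^{i(\alpha)}$; in these coordinates the matrix $V^i_k=c^i_{jk}X^j$ is block-diagonal with $r$ blocks, the $\alpha$-th block being the $m_\alpha\times m_\alpha$ lower-triangular Toeplitz matrix with entries $V^{i(\alpha)}_{k(\alpha)}=X^{(i-k+1)(\alpha)}$ for $i\ge k$ and $0$ for $i<k$. The uniqueness of $\nabla$ holds under the standing assumptions that $X^{1(\alpha)}\neq X^{1(\beta)}$ for $\alpha\ne\beta$ and $X^{2(\alpha)}\neq 0$ for each $\alpha$. A vector field $Y$ with $d_\nabla(Y\circ)=0$ defines a symmetry $\mathbf{u}_\tau=Y\circ\mathbf{u}_x$ of the system. *)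

theory Defs
  imports "HOL-Analysis.Analysis"
begin

text \<open>Coordinates on R^n are indexed by a finite type 'n; the map blk sends a flat
index to its double index (alpha, i), both 0-based (so the paper's i(alpha) with
i in 1..m_alpha corresponds to blk k = (alpha-1, i-1)).\<close>

definition cstr :: "('n \<Rightarrow> nat \<times> nat) \<Rightarrow> 'n \<Rightarrow> 'n \<Rightarrow> 'n \<Rightarrow> real" where
  "cstr blk i j k =
     (if fst (blk j) = fst (blk i) \<and> fst (blk k) = fst (blk i)
         \<and> snd (blk i) = snd (blk j) + snd (blk k) then 1 else 0)"
  \<comment> \<open>c^i_{jk} = delta^alpha_beta delta^alpha_gamma delta^i_{j+k-1} (1-based), i.e. i = j + k 0-based\<close>

definition unit_e :: "('n \<Rightarrow> nat \<times> nat) \<Rightarrow> real ^ 'n" where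
  "unit_e blk = (\<chi> i. if snd (blk i) = 0 then 1 else 0)"

definition pd :: "(real ^ 'n \<Rightarrow> real ^ 'n) \<Rightarrow> 'n \<Rightarrow> real ^ 'n \<Rightarrow> real ^ 'n" where
  "pd F j p = frechet_derivative F (at p) (axis j 1)"

text \<open>Covariant derivative nabla_j F^i = d_j F^i + Gamma^i_{jk} F^k,
  with Gamma p i j k = Gamma^i_{jk}(p).\<close>
definition cov :: "(real ^ 'n \<Rightarrow> 'n \<Rightarrow> 'n \<Rightarrow> 'n \<Rightarrow> real) \<Rightarrow> (real ^ 'n \<Rightarrow> real ^ 'n)
     \<Rightarrow> real ^ 'n \<Rightarrow> 'n \<Rightarrow> 'n \<Rightarrow> real" where
  "cov \<Gamma> F p j i = pd F j p $ i + (\<Sum>k\<in>UNIV. \<Gamma> p i j k * F p $ k)"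

definition dnabla :: "('n \<Rightarrow> nat \<times> nat) \<Rightarrow> (real ^ 'n \<Rightarrow> 'n \<Rightarrow> 'n \<Rightarrow> 'n \<Rightarrow> real)
     \<Rightarrow> (real ^ 'n \<Rightarrow> real ^ 'n) \<Rightarrow> real ^ 'n \<Rightarrow> 'n \<Rightarrow> 'n \<Rightarrow> 'n \<Rightarrow> real" where
  "dnabla blk \<Gamma> F p i j k =
     (\<Sum>s\<in>UNIV. cstr blk i j s * cov \<Gamma> F p k s - cstr blk i k s * cov \<Gamma> F p j s)"

end

theory Submission
  imports Defs
begin

(* Differentiating the hodograph relation x e + t X(u) = Y(u) in x and in t gives
   (Y' - t X') u_x = e and (Y' - t X') u_t = X(u).  Contracting d_nabla(X o) = 0 with the
   unit shows that nabla X is a multiplication operator w |-> w o b_X, and likewise for Y.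
   Since nabla e = 0 and Y - t X = x e along the solution, the Christoffel terms cancel, so
   Y' - t X' is multiplication by a single vector a.  Then u_x o a = e and u_t o a = X(u),
   whence u_t = u_t o u_x o a = X(u) o u_x. *)

definition sc_mult :: "('n::finite \<Rightarrow> 'n \<Rightarrow> 'n \<Rightarrow> real) \<Rightarrow> real^'n \<Rightarrow> real^'n \<Rightarrow> real^'n" where
  "sc_mult c a b = (\<chi> i. \<Sum>j\<in>UNIV. \<Sum>k\<in>UNIV. c i j k * a$j * b$k)"

lemma sum_swap_inner3:
  "(\<Sum>l\<in>A. \<Sum>j\<in>B. \<Sum>j'\<in>C. f l j j') = (\<Sum>j\<in>B. \<Sum>j'\<in>C. \<Sum>l\<in>A. f l j j')"
  by (subst sum.swap) (rule sum.cong[OF refl], rule sum.swap)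

lemma sc_mult_assoc:
  assumes "\<And>i j j' k. (\<Sum>l\<in>UNIV. c i l k * c l j j') = (\<Sum>l\<in>UNIV. c i j l * c l j' k)"
  shows "sc_mult c (sc_mult c a b) d = sc_mult c a (sc_mult c b d)"
proof -
  have "sc_mult c (sc_mult c a b) d $ i
      = (\<Sum>k\<in>UNIV. \<Sum>l\<in>UNIV. \<Sum>j\<in>UNIV. \<Sum>j'\<in>UNIV. c i l k * c l j j' * (a$j * b$j' * d$k))" for i
    unfolding sc_mult_def by (subst sum.swap) (simp add: sum_distrib_left sum_distrib_right mult_ac)
  also have "\<dots> i = (\<Sum>k\<in>UNIV. \<Sum>j\<in>UNIV. \<Sum>j'\<in>UNIV. (\<Sum>l\<in>UNIV. c i l k * c l j j') * (a$j * b$j' * d$k))" for i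
    by (rule sum.cong[OF refl], subst sum_swap_inner3) (simp add: sum_distrib_right)
  also have "\<dots> i = (\<Sum>k\<in>UNIV. \<Sum>j\<in>UNIV. \<Sum>j'\<in>UNIV. (\<Sum>l\<in>UNIV. c i j l * c l j' k) * (a$j * b$j' * d$k))" for i
    by (simp add: assms)
  also have "\<dots> i = (\<Sum>j\<in>UNIV. \<Sum>l\<in>UNIV. \<Sum>j'\<in>UNIV. \<Sum>k\<in>UNIV. c i j l * c l j' k * (a$j * b$j' * d$k))" for i
    by (subst (2) sum_swap_inner3, subst sum_swap_inner3) (simp add: sum_distrib_right)
  also have "\<dots> i = sc_mult c a (sc_mult c b d) $ i" for i
    unfolding sc_mult_def by (simp add: sum_distrib_left sum_distrib_right mult_ac)
  finally show ?thesis by (simp add: vec_eq_iff)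
qed

lemma sc_mult_commute:
  assumes "\<And>i j k. c i j k = c i k j"
  shows "sc_mult c a b = sc_mult c b a"
  unfolding sc_mult_def by (subst sum.swap) (simp add: assms mult_ac)

lemma sc_mult_unit_left:
  assumes "\<And>i k. (\<Sum>j\<in>UNIV. c i j k * e$j) = (if k = i then 1 else 0)"
  shows "sc_mult c e a = a"
proof -
  have "sc_mult c e a $ i = (\<Sum>k\<in>UNIV. (\<Sum>j\<in>UNIV. c i j k * e$j) * a$k)" for i
    unfolding sc_mult_def by (subst sum.swap) (simp add: sum_distrib_right)
  also have "\<dots> i = a $ i" for i
    by (simp add: assms if_distrib[of "\<lambda>x. x * _"] cong: if_cong)
  finally show ?thesis by (simp add: vec_eq_iff)
qed

lemma closed_tensor_eq_mult_contraction:
  fixes c C :: "'n::finite \<Rightarrow> 'n \<Rightarrow> _" and e :: "real^'n"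
  assumes unit: "\<And>s. (\<Sum>j\<in>UNIV. c i j s * e$j) = (if s = i then 1 else 0)"
    and closed: "\<And>j. (\<Sum>s\<in>UNIV. c i j s * C k s - c i k s * C j s) = 0"
  shows "C k i = (\<Sum>s\<in>UNIV. c i k s * (\<Sum>j\<in>UNIV. e$j * C j s))"
proof -
  have "0 = (\<Sum>j\<in>UNIV. e$j * (\<Sum>s\<in>UNIV. c i j s * C k s - c i k s * C j s))"
    by (simp add: closed)
  also have "\<dots> = (\<Sum>j\<in>UNIV. \<Sum>s\<in>UNIV. c i j s * e$j * C k s)
      - (\<Sum>j\<in>UNIV. \<Sum>s\<in>UNIV. c i k s * (e$j * C j s))"
    by (simp add: sum_distrib_left right_diff_distrib sum_subtractf mult_ac)
  also have "\<dots> = (\<Sum>s\<in>UNIV. (\<Sum>j\<in>UNIV. c i j s * e$j) * C k s)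
      - (\<Sum>s\<in>UNIV. c i k s * (\<Sum>j\<in>UNIV. e$j * C j s))"
    by (subst (1 2) sum.swap) (simp add: sum_distrib_left sum_distrib_right)
  also have "(\<Sum>s\<in>UNIV. (\<Sum>j\<in>UNIV. c i j s * e$j) * C k s) = C k i"
    by (simp add: unit if_distrib[of "\<lambda>x. x * _"] cong: if_cong)
  finally show ?thesis
    by simp
qed

lemma frechet_derivative_component:
  fixes F :: "real^'n::finite \<Rightarrow> real^'n"
  assumes "F differentiable at p"
  shows "frechet_derivative F (at p) w $ l = (\<Sum>k\<in>UNIV. w$k * pd F k p $ l)"
proof -
  have "linear (frechet_derivative F (at p))"
    using assms frechet_derivative_works has_derivative_linear by blast
  then show ?thesis
    unfolding pd_def by (simp add: linear_componentwise linear_matrix_vector_mul_eq)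
qed

lemma hodograph_linearized:
  fixes u :: "real \<times> real \<Rightarrow> 'a::real_normed_vector" and e :: "'b::real_normed_vector"
  assumes "open D" and z: "(x, t) \<in> D"
    and hodograph: "\<forall>x t. (x, t) \<in> D \<longrightarrow> x *\<^sub>R e + t *\<^sub>R X (u (x, t)) = Y (u (x, t))"
    and u': "(u has_derivative u') (at (x, t))"
    and X': "(X has_derivative X') (at (u (x, t)))" and Y': "(Y has_derivative Y') (at (u (x, t)))"
  shows "fst h *\<^sub>R e + t *\<^sub>R X' (u' h) + snd h *\<^sub>R X (u (x, t)) = Y' (u' h)"
proof -
  let ?G = "\<lambda>w. fst w *\<^sub>R e + snd w *\<^sub>R X (u w) - Y (u w)"
  have "(?G has_derivative (\<lambda>h. fst h *\<^sub>R e + (t *\<^sub>R X' (u' h) + snd h *\<^sub>R X (u (x, t)))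
      - Y' (u' h))) (at (x, t))"
    by (rule derivative_eq_intros diff_chain_at[OF u' X', unfolded o_def]
        diff_chain_at[OF u' Y', unfolded o_def] refl | simp)+
  moreover have "(?G has_derivative (\<lambda>h. 0)) (at (x, t))"
  proof (rule has_derivative_transform_within_open[OF has_derivative_const \<open>open D\<close> z])
    show "0 = ?G w" if "w \<in> D" for w
      using hodograph that by (cases w) simp
  qed
  ultimately show ?thesis
    using has_derivative_unique by (fastforce simp: algebra_simps dest: fun_cong[of _ _ h])
qed

lemma cstr_commute: "cstr blk i j k = cstr blk i k j"
  unfolding cstr_def by (simp add: add.commute conj_commute)

locale block_coordinates =
  fixes blk :: "'n::finite \<Rightarrow> nat \<times> nat" and r :: nat and m :: "nat \<Rightarrow> nat"
  assumes bij: "bij_betw blk UNIV {(a, i). a < r \<and> i < m a}"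
begin

lemma inj_blk: "inj blk"
  using bij by (rule bij_betw_imp_inj_on)

lemma range_blk: "range blk = {(a, i). a < r \<and> i < m a}"
  using bij by (rule bij_betw_imp_surj_on)

lemma lower_index_in_range:
  assumes "n \<le> snd (blk i)"
  shows "(fst (blk i), n) \<in> range blk"
proof -
  have "blk i \<in> range blk"
    by simp
  with assms show ?thesis
    unfolding range_blk by auto
qed

lemma sum_indicator_blk_eq:
  assumes "P \<Longrightarrow> q \<in> range blk"
  shows "(\<Sum>l\<in>UNIV. if blk l = q \<and> P then 1 else 0 :: real) = (if P then 1 else 0)"
proof (cases P)
  case True
  then obtain l0 where "q = blk l0"
    using assms by blast
  then have "\<And>l. blk l = q \<longleftrightarrow> l = l0"
    using inj_blk by (auto dest: injD)
  with True show ?thesis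
    by simp
qed simp

lemma sum_cstr_cstr:
  "(\<Sum>l\<in>UNIV. cstr blk i l k * cstr blk l j j') =
     (if fst (blk j) = fst (blk i) \<and> fst (blk j') = fst (blk i) \<and> fst (blk k) = fst (blk i)
         \<and> snd (blk i) = snd (blk j) + snd (blk j') + snd (blk k) then 1 else 0)"
  (is "_ = (if ?P then 1 else 0)")
proof -
  let ?q = "(fst (blk i), snd (blk j) + snd (blk j'))"
  have "(\<Sum>l\<in>UNIV. cstr blk i l k * cstr blk l j j')
      = (\<Sum>l\<in>UNIV. if blk l = ?q \<and> ?P then 1 else 0)"
    by (intro sum.cong) (auto simp: cstr_def prod_eq_iff)
  also have "\<dots> = (if ?P then 1 else 0)"
    by (rule sum_indicator_blk_eq) (simp add: lower_index_in_range)
  finally show ?thesis .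
qed

lemma cstr_assoc:
  "(\<Sum>l\<in>UNIV. cstr blk i l k * cstr blk l j j') = (\<Sum>l\<in>UNIV. cstr blk i j l * cstr blk l j' k)"
  unfolding cstr_commute[of blk i j] sum_cstr_cstr by auto

lemma sum_cstr_unit_e:
  "(\<Sum>j\<in>UNIV. cstr blk i j k * unit_e blk $ j) = (if k = i then 1 else 0)"
proof -
  have "blk k = blk i \<longleftrightarrow> k = i"
    using inj_blk by (auto dest: injD)
  then have "(\<Sum>j\<in>UNIV. cstr blk i j k * unit_e blk $ j)
      = (\<Sum>j\<in>UNIV. if blk j = (fst (blk i), 0) \<and> k = i then 1 else 0)"
    by (intro sum.cong) (auto simp: cstr_def unit_e_def prod_eq_iff)
  also have "\<dots> = (if k = i then 1 else 0)"
    by (rule sum_indicator_blk_eq) (simp add: lower_index_in_range)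
  finally show ?thesis .
qed

lemma cov_eq_mult_unit_cov:
  assumes "\<forall>i j k. dnabla blk \<Gamma> F p i j k = 0"
  shows "cov \<Gamma> F p k i = (\<Sum>s\<in>UNIV. cstr blk i k s * (\<Sum>j\<in>UNIV. unit_e blk $ j * cov \<Gamma> F p j s))"
  using assms by (intro closed_tensor_eq_mult_contraction) (simp_all add: sum_cstr_unit_e dnabla_def)

lemma mult_right_inverse_cancel:
  assumes "sc_mult (cstr blk) v a = unit_e blk"
  shows "w = sc_mult (cstr blk) (sc_mult (cstr blk) w a) v"
proof -
  have comm: "sc_mult (cstr blk) x y = sc_mult (cstr blk) y x" for x y
    by (rule sc_mult_commute) (rule cstr_commute)
  have "w = sc_mult (cstr blk) (unit_e blk) w"
    by (simp add: sc_mult_unit_left sum_cstr_unit_e)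
  also have "\<dots> = sc_mult (cstr blk) v (sc_mult (cstr blk) a w)"
    by (simp add: assms[symmetric] sc_mult_assoc cstr_assoc)
  also have "\<dots> = sc_mult (cstr blk) (sc_mult (cstr blk) w a) v"
    by (metis comm)
  finally show ?thesis .
qed

lemma hodograph_differential_eq_mult:
  assumes X: "X differentiable at p" and Y: "Y differentiable at p"
    and nabla_e: "\<forall>i j. cov \<Gamma> (\<lambda>_. unit_e blk) p j i = 0"
    and nabla_X: "\<forall>i j k. dnabla blk \<Gamma> X p i j k = 0"
    and nabla_Y: "\<forall>i j k. dnabla blk \<Gamma> Y p i j k = 0"
    and Yp: "Y p = x *\<^sub>R unit_e blk + t *\<^sub>R X p"
  obtains a where "\<And>w. frechet_derivative Y (at p) w - t *\<^sub>R frechet_derivative X (at p) w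
      = sc_mult (cstr blk) w a"
proof
  define a where "a = (\<chi> s. \<Sum>j\<in>UNIV. unit_e blk $ j * (cov \<Gamma> Y p j s - t * cov \<Gamma> X p j s))"
  have Gamma_e: "(\<Sum>q\<in>UNIV. \<Gamma> p l k q * unit_e blk $ q) = 0" for k l
    using nabla_e by (simp add: cov_def pd_def)
  have "(\<Sum>q\<in>UNIV. \<Gamma> p l k q * Y p $ q)
      = x * (\<Sum>q\<in>UNIV. \<Gamma> p l k q * unit_e blk $ q) + t * (\<Sum>q\<in>UNIV. \<Gamma> p l k q * X p $ q)" for k l
    by (simp add: Yp sum.distrib sum_distrib_left algebra_simps)
  then have "(\<Sum>q\<in>UNIV. \<Gamma> p l k q * Y p $ q) = t * (\<Sum>q\<in>UNIV. \<Gamma> p l k q * X p $ q)" for k l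
    by (simp add: Gamma_e)
  then have "pd Y k p $ l - t * pd X k p $ l = cov \<Gamma> Y p k l - t * cov \<Gamma> X p k l" for k l
    by (simp add: cov_def algebra_simps)
  also have "\<dots> k l = (\<Sum>s\<in>UNIV. cstr blk l k s * a $ s)" for k l
    by (simp add: cov_eq_mult_unit_cov[OF nabla_X, of k l] cov_eq_mult_unit_cov[OF nabla_Y, of k l]
        a_def sum_distrib_left sum_subtractf algebra_simps)
  finally have pd_eq: "pd Y k p $ l - t * pd X k p $ l = (\<Sum>s\<in>UNIV. cstr blk l k s * a $ s)" for k l .
  show "frechet_derivative Y (at p) w - t *\<^sub>R frechet_derivative X (at p) w = sc_mult (cstr blk) w a" for w
  proof -
    have "(frechet_derivative Y (at p) w - t *\<^sub>R frechet_derivative X (at p) w) $ l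
        = (\<Sum>k\<in>UNIV. w$k * (pd Y k p $ l - t * pd X k p $ l))" for l
      by (simp add: frechet_derivative_component[OF X] frechet_derivative_component[OF Y]
          sum_distrib_left sum_subtractf algebra_simps)
    then show ?thesis
      by (simp add: vec_eq_iff pd_eq sc_mult_def sum_distrib_left mult_ac)
  qed
qed

end

theorem theorem2p1:
  fixes r :: nat and m :: "nat \<Rightarrow> nat" and blk :: "'n::finite \<Rightarrow> nat \<times> nat"
    and U :: "(real ^ 'n) set" and X Y :: "real ^ 'n \<Rightarrow> real ^ 'n"
    and \<Gamma> :: "real ^ 'n \<Rightarrow> 'n \<Rightarrow> 'n \<Rightarrow> 'n \<Rightarrow> real"
    and D :: "(real \<times> real) set" and u :: "real \<times> real \<Rightarrow> real ^ 'n"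
  assumes blocks: "\<forall>a<r. 0 < m a"
    and blk: "bij_betw blk UNIV {(a, i). a < r \<and> i < m a}"
    and U_open: "open U"
    and X_diff: "\<forall>p\<in>U. X differentiable (at p)"
    and Y_diff: "\<forall>p\<in>U. Y differentiable (at p)"
    and torsionless: "\<forall>p\<in>U. \<forall>i j k. \<Gamma> p i j k = \<Gamma> p i k j"
    and nabla_e: "\<forall>p\<in>U. \<forall>i j. cov \<Gamma> (\<lambda>_. unit_e blk) p j i = 0"
    and nabla_X: "\<forall>p\<in>U. \<forall>i j k. dnabla blk \<Gamma> X p i j k = 0"
    and nabla_Y: "\<forall>p\<in>U. \<forall>i j k. dnabla blk \<Gamma> Y p i j k = 0"
    and D_open: "open D"
    and u_in: "\<forall>z\<in>D. u z \<in> U"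
    and u_diff: "\<forall>z\<in>D. u differentiable (at z)"
    and hodograph: "\<forall>x t. (x, t) \<in> D \<longrightarrow> x *\<^sub>R unit_e blk + t *\<^sub>R X (u (x, t)) = Y (u (x, t))"
  shows "\<forall>x t. (x, t) \<in> D \<longrightarrow> (\<forall>i.
           frechet_derivative u (at (x, t)) (0, 1) $ i =
           (\<Sum>j\<in>UNIV. \<Sum>k\<in>UNIV. cstr blk i j k * X (u (x, t)) $ j
                              * frechet_derivative u (at (x, t)) (1, 0) $ k))"
proof (intro allI impI)
  fix x t i
  assume z: "(x, t) \<in> D"
  interpret block_coordinates blk r m
    using blk by (rule block_coordinates.intro)
  define p where "p = u (x, t)"
  define u' where "u' = frechet_derivative u (at (x, t))"
  have "p \<in> U"
    using u_in z by (simp add: p_def)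
  then have X: "X differentiable at p" and Y: "Y differentiable at p"
    and "\<forall>i j. cov \<Gamma> (\<lambda>_. unit_e blk) p j i = 0"
    and "\<forall>i j k. dnabla blk \<Gamma> X p i j k = 0" and "\<forall>i j k. dnabla blk \<Gamma> Y p i j k = 0"
    using X_diff Y_diff nabla_e nabla_X nabla_Y by auto
  moreover have "Y p = x *\<^sub>R unit_e blk + t *\<^sub>R X p"
    using hodograph z by (simp add: p_def)
  ultimately obtain a where a: "\<And>w. frechet_derivative Y (at p) w - t *\<^sub>R frechet_derivative X (at p) w
      = sc_mult (cstr blk) w a"
    using hodograph_differential_eq_mult by blast
  have "fst h *\<^sub>R unit_e blk + t *\<^sub>R frechet_derivative X (at p) (u' h) + snd h *\<^sub>R X p
      = frechet_derivative Y (at p) (u' h)" for h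
    using hodograph_linearized[of D x t "unit_e blk" X u Y u' "frechet_derivative X (at p)"
        "frechet_derivative Y (at p)", OF D_open z hodograph] u_diff z X Y
    by (simp add: p_def u'_def frechet_derivative_works)
  from this[of "(1, 0)"] this[of "(0, 1)"]
  have "sc_mult (cstr blk) (u' (1, 0)) a = unit_e blk" and "sc_mult (cstr blk) (u' (0, 1)) a = X p"
    by (simp_all add: a[symmetric] algebra_simps)
  then have "u' (0, 1) = sc_mult (cstr blk) (X p) (u' (1, 0))"
    by (metis mult_right_inverse_cancel)
  then show "u' (0, 1) $ i = (\<Sum>j\<in>UNIV. \<Sum>k\<in>UNIV. cstr blk i j k * X p $ j * u' (1, 0) $ k)"
    by (simp add: sc_mult_def)
qed

end
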